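(* Let $L$ be an i--lattice. Then: (1) for all $\theta\in{\rm Con}(L)$, $Cg_{L,\mathbb{I}}(\theta)=\theta\vee\theta'$; (2) for all $U\subseteq L^2$, $Cg_{L,\mathbb{I}}(U)=Cg_L(U)\vee(Cg_L(U))'=Cg_L(U)\vee Cg_L(U')$; (3) for all $a,b\in L$, $Cg_{L,\mathbb{I}}(a,b)=Cg_L(a,b)\vee(Cg_L(a,b))'=Cg_L(a,b)\vee Cg_L(a',b')$.
   Context: An i--lattice is a lattice $L$ with a unary operation $'$ such that $a''=a$ and $a\leq b\Rightarrow b'\leq a'$. ${\rm Con}(L)$ is the lattice of lattice congruences (joins $\vee$ in ${\rm Con}(L)$). $Cg_L(U)$ is the lattice congruence generated by $U\subseteq L^2$ and $Cg_{L,\mathbb{I}}(U)$ the congruence of the i--lattice $L$ (lattice congruence preserving $'$) generated by $U$; $Cg_L(a,b)=Cg_L(\{(a,b)\})$, similarly for $Cg_{L,\mathbb{I}}(a,b)$. For $U\subseteq L^2$, $U'=\{(a',b'):(a,b)\in U\}$. *)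

theory Defs
  imports Main
begin

definition i_lattice :: "('a::lattice \<Rightarrow> 'a) \<Rightarrow> bool" where
  "i_lattice f \<longleftrightarrow> (\<forall>a. f (f a) = a) \<and> (\<forall>a b. a \<le> b \<longrightarrow> f b \<le> f a)"

definition lat_con :: "('a::lattice) rel \<Rightarrow> bool" where
  "lat_con \<theta> \<longleftrightarrow> equiv UNIV \<theta> \<and>
     (\<forall>a b c d. (a,b) \<in> \<theta> \<and> (c,d) \<in> \<theta> \<longrightarrow>
        (sup a c, sup b d) \<in> \<theta> \<and> (inf a c, inf b d) \<in> \<theta>)"

definition ilat_con :: "('a::lattice \<Rightarrow> 'a) \<Rightarrow> 'a rel \<Rightarrow> bool" where
  "ilat_con f \<theta> \<longleftrightarrow> lat_con \<theta> \<and> (\<forall>a b. (a,b) \<in> \<theta> \<longrightarrow> (f a, f b) \<in> \<theta>)"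

definition lat_Cg :: "('a::lattice) rel \<Rightarrow> 'a rel" where
  "lat_Cg U = \<Inter>{\<theta>. lat_con \<theta> \<and> U \<subseteq> \<theta>}"

definition ilat_Cg :: "('a::lattice \<Rightarrow> 'a) \<Rightarrow> 'a rel \<Rightarrow> 'a rel" where
  "ilat_Cg f U = \<Inter>{\<theta>. ilat_con f \<theta> \<and> U \<subseteq> \<theta>}"

definition con_join :: "('a::lattice) rel \<Rightarrow> 'a rel \<Rightarrow> 'a rel" where
  "con_join \<theta> \<psi> = lat_Cg (\<theta> \<union> \<psi>)"

definition prime_rel :: "('a \<Rightarrow> 'a) \<Rightarrow> 'a rel \<Rightarrow> 'a rel" where
  "prime_rel f U = {(f a, f b) | a b. (a,b) \<in> U}"

end

theory Submission
  imports Defs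
begin

text \<open>The i-lattice congruence generated by U must contain both Cg(U) and its image Cg(U)'
  under the involution; conversely their join is already closed under the involution, because
  the involution is a lattice anti-automorphism, so priming maps congruences to congruences,
  commutes with generation, and swaps the two joinands.\<close>

lemma lat_con_Inter:
  assumes "\<And>\<theta>. \<theta> \<in> S \<Longrightarrow> lat_con \<theta>"
  shows "lat_con (\<Inter>S)"
proof -
  have "refl \<theta>" "sym \<theta>" "trans \<theta>" if "\<theta> \<in> S" for \<theta>
    using assms[OF that] unfolding lat_con_def equiv_def by blast+
  then have "equiv UNIV (\<Inter>S)"
    by (intro equivI refl_onI symI transI) (auto intro: refl_onD, metis symD, metis transD)
  moreover have "(sup a c, sup b d) \<in> \<Inter>S \<and> (inf a c, inf b d) \<in> \<Inter>S"
    if "(a, b) \<in> \<Inter>S" "(c, d) \<in> \<Inter>S" for a b c d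
    using assms that unfolding lat_con_def by blast
  ultimately show ?thesis
    unfolding lat_con_def by blast
qed

lemma ilat_con_Inter:
  assumes "\<And>\<theta>. \<theta> \<in> S \<Longrightarrow> ilat_con f \<theta>"
  shows "ilat_con f (\<Inter>S)"
proof -
  have "lat_con (\<Inter>S)"
    using assms by (intro lat_con_Inter) (simp add: ilat_con_def)
  then show ?thesis
    using assms unfolding ilat_con_def by blast
qed

lemma lat_con_lat_Cg: "lat_con (lat_Cg U)"
  unfolding lat_Cg_def by (rule lat_con_Inter) blast

lemma lat_Cg_upper: "U \<subseteq> lat_Cg U"
  unfolding lat_Cg_def by blast

lemma lat_Cg_least: "lat_con \<theta> \<Longrightarrow> U \<subseteq> \<theta> \<Longrightarrow> lat_Cg U \<subseteq> \<theta>"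
  unfolding lat_Cg_def by blast

lemma lat_Cg_lat_con: "lat_con \<theta> \<Longrightarrow> lat_Cg \<theta> = \<theta>"
  using lat_Cg_upper lat_Cg_least by blast

lemma ilat_con_ilat_Cg: "ilat_con f (ilat_Cg f U)"
  unfolding ilat_Cg_def by (rule ilat_con_Inter) blast

lemma ilat_Cg_upper: "U \<subseteq> ilat_Cg f U"
  unfolding ilat_Cg_def by blast

lemma ilat_Cg_least: "ilat_con f \<theta> \<Longrightarrow> U \<subseteq> \<theta> \<Longrightarrow> ilat_Cg f U \<subseteq> \<theta>"
  unfolding ilat_Cg_def by blast

lemma ilat_con_iff_prime_rel_subset:
  "ilat_con f \<theta> \<longleftrightarrow> lat_con \<theta> \<and> prime_rel f \<theta> \<subseteq> \<theta>"
  unfolding ilat_con_def prime_rel_def by blast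

lemma i_lattice_involution: "i_lattice f \<Longrightarrow> f (f a) = a"
  unfolding i_lattice_def by blast

lemma i_lattice_sup:
  assumes "i_lattice f"
  shows "f (sup a b) = inf (f a) (f b)"
proof (rule antisym)
  have anti: "x \<le> y \<Longrightarrow> f y \<le> f x" for x y
    using assms unfolding i_lattice_def by blast
  note inv = i_lattice_involution[OF assms]
  show "f (sup a b) \<le> inf (f a) (f b)"
    by (simp add: anti)
  have "a \<le> f (inf (f a) (f b))" "b \<le> f (inf (f a) (f b))"
    using anti[of "inf (f a) (f b)" "f a"] anti[of "inf (f a) (f b)" "f b"] by (simp_all add: inv)
  then have "f (f (inf (f a) (f b))) \<le> f (sup a b)"
    by (simp add: anti)
  then show "inf (f a) (f b) \<le> f (sup a b)"
    by (simp add: inv)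
qed

lemma i_lattice_inf:
  assumes "i_lattice f"
  shows "f (inf a b) = sup (f a) (f b)"
proof -
  note inv = i_lattice_involution[OF assms]
  have "f (sup (f a) (f b)) = inf a b"
    by (simp add: i_lattice_sup[OF assms] inv)
  then have "f (f (sup (f a) (f b))) = f (inf a b)"
    by simp
  then show ?thesis
    by (simp add: inv)
qed

lemma prime_rel_iff:
  assumes "\<And>a. f (f a) = a"
  shows "(x, y) \<in> prime_rel f U \<longleftrightarrow> (f x, f y) \<in> U"
proof
  assume "(x, y) \<in> prime_rel f U"
  then obtain a b where "x = f a" "y = f b" "(a, b) \<in> U"
    unfolding prime_rel_def by blast
  then show "(f x, f y) \<in> U"
    by (simp add: assms)
next
  assume "(f x, f y) \<in> U"
  then have "(f (f x), f (f y)) \<in> prime_rel f U"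
    unfolding prime_rel_def by blast
  then show "(x, y) \<in> prime_rel f U"
    by (simp add: assms)
qed

lemma prime_rel_prime_rel:
  assumes "\<And>a. f (f a) = a"
  shows "prime_rel f (prime_rel f U) = U"
  using prime_rel_iff[of f, OF assms] assms by auto

lemma prime_rel_mono: "U \<subseteq> V \<Longrightarrow> prime_rel f U \<subseteq> prime_rel f V"
  unfolding prime_rel_def by blast

lemma prime_rel_Un: "prime_rel f (U \<union> V) = prime_rel f U \<union> prime_rel f V"
  unfolding prime_rel_def by blast

lemma lat_con_prime_rel:
  assumes "i_lattice f" and "lat_con \<theta>"
  shows "lat_con (prime_rel f \<theta>)"
proof -
  note mem = prime_rel_iff[of f, OF i_lattice_involution[OF assms(1)]]
  have "refl \<theta>" "sym \<theta>" "trans \<theta>"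
    using assms(2) unfolding lat_con_def equiv_def by blast+
  then have "equiv UNIV (prime_rel f \<theta>)"
    by (intro equivI refl_onI symI transI) (auto simp: mem intro: refl_onD, metis symD, metis transD)
  moreover have "(sup a c, sup b d) \<in> prime_rel f \<theta> \<and> (inf a c, inf b d) \<in> prime_rel f \<theta>"
    if "(a, b) \<in> prime_rel f \<theta>" "(c, d) \<in> prime_rel f \<theta>" for a b c d
  proof -
    have "(f a, f b) \<in> \<theta>" "(f c, f d) \<in> \<theta>"
      using that by (simp_all add: mem)
    then have "(inf (f a) (f c), inf (f b) (f d)) \<in> \<theta> \<and> (sup (f a) (f c), sup (f b) (f d)) \<in> \<theta>"
      using assms(2) unfolding lat_con_def by blast
    then show ?thesis
      by (simp add: mem i_lattice_sup[OF assms(1)] i_lattice_inf[OF assms(1)])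
  qed
  ultimately show ?thesis
    unfolding lat_con_def by blast
qed

lemma prime_rel_lat_Cg:
  assumes "i_lattice f"
  shows "prime_rel f (lat_Cg U) = lat_Cg (prime_rel f U)"
proof
  note pp = prime_rel_prime_rel[of f, OF i_lattice_involution[OF assms]]
  show "lat_Cg (prime_rel f U) \<subseteq> prime_rel f (lat_Cg U)"
    by (intro lat_Cg_least lat_con_prime_rel[OF assms] lat_con_lat_Cg prime_rel_mono lat_Cg_upper)
  have "U \<subseteq> prime_rel f (lat_Cg (prime_rel f U))"
    using prime_rel_mono[OF lat_Cg_upper[of "prime_rel f U"], of f] by (simp add: pp)
  then have "lat_Cg U \<subseteq> prime_rel f (lat_Cg (prime_rel f U))"
    by (intro lat_Cg_least lat_con_prime_rel[OF assms] lat_con_lat_Cg)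
  then have "prime_rel f (lat_Cg U) \<subseteq> prime_rel f (prime_rel f (lat_Cg (prime_rel f U)))"
    by (rule prime_rel_mono)
  then show "prime_rel f (lat_Cg U) \<subseteq> lat_Cg (prime_rel f U)"
    by (simp only: pp)
qed

lemma ilat_Cg_eq_con_join:
  assumes "i_lattice f"
  shows "ilat_Cg f U = con_join (lat_Cg U) (prime_rel f (lat_Cg U))"
proof
  let ?C = "lat_Cg U"
  let ?J = "lat_Cg (?C \<union> prime_rel f ?C)"
  have "prime_rel f ?J = lat_Cg (prime_rel f ?C \<union> ?C)"
    by (simp add: prime_rel_lat_Cg[OF assms] prime_rel_Un
        prime_rel_prime_rel[of f, OF i_lattice_involution[OF assms]])
  then have "prime_rel f ?J = ?J"
    by (simp add: Un_commute)
  then have "ilat_con f ?J"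
    by (simp add: ilat_con_iff_prime_rel_subset lat_con_lat_Cg)
  moreover have "U \<subseteq> ?J"
    using lat_Cg_upper[of U] lat_Cg_upper[of "?C \<union> prime_rel f ?C"] by blast
  ultimately show "ilat_Cg f U \<subseteq> con_join ?C (prime_rel f ?C)"
    unfolding con_join_def by (rule ilat_Cg_least)
next
  let ?I = "ilat_Cg f U"
  have "lat_con ?I" and prime_I: "prime_rel f ?I \<subseteq> ?I"
    using ilat_con_ilat_Cg[of f U] by (simp_all add: ilat_con_iff_prime_rel_subset)
  then have "lat_Cg U \<subseteq> ?I"
    by (intro lat_Cg_least ilat_Cg_upper)
  moreover from this have "prime_rel f (lat_Cg U) \<subseteq> ?I"
    using prime_rel_mono[of _ _ f] prime_I by blast
  ultimately show "con_join (lat_Cg U) (prime_rel f (lat_Cg U)) \<subseteq> ?I"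
    unfolding con_join_def using \<open>lat_con ?I\<close> by (intro lat_Cg_least) blast+
qed

theorem lemma4p30:
  fixes f :: "'a::lattice \<Rightarrow> 'a"
  assumes "i_lattice f"
  shows "(\<forall>\<theta>. lat_con \<theta> \<longrightarrow> ilat_Cg f \<theta> = con_join \<theta> (prime_rel f \<theta>))
    \<and> (\<forall>U. ilat_Cg f U = con_join (lat_Cg U) (prime_rel f (lat_Cg U))
           \<and> con_join (lat_Cg U) (prime_rel f (lat_Cg U)) = con_join (lat_Cg U) (lat_Cg (prime_rel f U)))
    \<and> (\<forall>a b. ilat_Cg f {(a,b)} = con_join (lat_Cg {(a,b)}) (prime_rel f (lat_Cg {(a,b)}))
           \<and> con_join (lat_Cg {(a,b)}) (prime_rel f (lat_Cg {(a,b)}))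
               = con_join (lat_Cg {(a,b)}) (lat_Cg {(f a, f b)}))"
proof -
  note generated = ilat_Cg_eq_con_join[OF assms] prime_rel_lat_Cg[OF assms]
  have "prime_rel f {(a, b)} = {(f a, f b)}" for a b
    unfolding prime_rel_def by blast
  moreover have "ilat_Cg f \<theta> = con_join \<theta> (prime_rel f \<theta>)" if "lat_con \<theta>" for \<theta>
    using ilat_Cg_eq_con_join[OF assms, of \<theta>] lat_Cg_lat_con[OF that] by simp
  ultimately show ?thesis
    using generated by simp
qed

end
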